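(* Let $\Bbbk$ be an algebraically closed field of characteristic $2$ and let $\mathfrak{u}(\mathfrak{m})$ be the algebra generated by $a,b,c$ with relations $ab+ba=c$, $ac+ca=a$, $bc+cb=b$, $a^4=b^4=0$, $c^2+c=0$. Then, up to isomorphism, the simple finite-dimensional left $\mathfrak{u}(\mathfrak{m})$-modules are exactly $V_0$ and $V_1$.
   Context: $V_0$ is the one-dimensional module on which $a,b,c$ act by $0$. $V_1$ is the three-dimensional module with basis $v_1,v_2,v_3$ and action $av_1=v_2$, $av_2=v_3$, $av_3=0$; $bv_1=0$, $bv_2=v_1$, $bv_3=v_2$; $cv_1=v_1$, $cv_2=0$, $cv_3=v_3$ (this is the adjoint representation on the $3$-dimensional Lie algebra with basis $b,c,a$). *)

theory Defs
  imports "HOL-Computational_Algebra.Polynomial" "Jordan_Normal_Form.Matrix"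
begin

text \<open>A finite-dimensional left module over u(m) = k<a,b,c> / (relations) is the same as
  a finite-dimensional k-vector space k^n with three endomorphisms (n x n matrices A, B, C,
  the actions of a, b, c) satisfying the defining relations.\<close>

definition um_module :: "nat \<Rightarrow> 'k::field mat \<Rightarrow> 'k mat \<Rightarrow> 'k mat \<Rightarrow> bool" where
  "um_module n A B C \<longleftrightarrow>
     A \<in> carrier_mat n n \<and> B \<in> carrier_mat n n \<and> C \<in> carrier_mat n n \<and>
     A * B + B * A = C \<and> A * C + C * A = A \<and> B * C + C * B = B \<and>
     A ^\<^sub>m 4 = 0\<^sub>m n n \<and> B ^\<^sub>m 4 = 0\<^sub>m n n \<and> C * C + C = 0\<^sub>m n n"

definition invariant_subspace :: "nat \<Rightarrow> 'k::field mat \<Rightarrow> 'k mat \<Rightarrow> 'k mat \<Rightarrow> 'k vec set \<Rightarrow> bool" where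
  "invariant_subspace n A B C W \<longleftrightarrow>
     W \<subseteq> carrier_vec n \<and> 0\<^sub>v n \<in> W \<and>
     (\<forall>x\<in>W. \<forall>y\<in>W. x + y \<in> W) \<and> (\<forall>s. \<forall>x\<in>W. s \<cdot>\<^sub>v x \<in> W) \<and>
     (\<forall>x\<in>W. A *\<^sub>v x \<in> W \<and> B *\<^sub>v x \<in> W \<and> C *\<^sub>v x \<in> W)"

definition simple_module :: "nat \<Rightarrow> 'k::field mat \<Rightarrow> 'k mat \<Rightarrow> 'k mat \<Rightarrow> bool" where
  "simple_module n A B C \<longleftrightarrow> um_module n A B C \<and> n > 0 \<and>
     (\<forall>W. invariant_subspace n A B C W \<longrightarrow> W = {0\<^sub>v n} \<or> W = carrier_vec n)"

definition module_iso :: "nat \<Rightarrow> 'k::field mat \<Rightarrow> 'k mat \<Rightarrow> 'k mat \<Rightarrow>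
                          nat \<Rightarrow> 'k mat \<Rightarrow> 'k mat \<Rightarrow> 'k mat \<Rightarrow> bool" where
  "module_iso n A B C m A' B' C' \<longleftrightarrow> n = m \<and>
     (\<exists>P \<in> carrier_mat n n. invertible_mat P \<and> P * A = A' * P \<and> P * B = B' * P \<and> P * C = C' * P)"

definition V0_a :: "'k::field mat" where "V0_a = 0\<^sub>m 1 1"
definition V0_b :: "'k::field mat" where "V0_b = 0\<^sub>m 1 1"
definition V0_c :: "'k::field mat" where "V0_c = 0\<^sub>m 1 1"

text \<open>V_1 with basis v1,v2,v3 (indices 0,1,2); entry (i,j) is the v_(i+1)-coefficient of
  the image of v_(j+1).  a v1 = v2, a v2 = v3, a v3 = 0; b v1 = 0, b v2 = v1, b v3 = v2;
  c v1 = v1, c v2 = 0, c v3 = v3.\<close>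
definition V1_a :: "'k::field mat" where
  "V1_a = mat 3 3 (\<lambda>(i,j). if (i,j) = (1,0) \<or> (i,j) = (2,1) then 1 else 0)"
definition V1_b :: "'k::field mat" where
  "V1_b = mat 3 3 (\<lambda>(i,j). if (i,j) = (0,1) \<or> (i,j) = (1,2) then 1 else 0)"
definition V1_c :: "'k::field mat" where
  "V1_c = mat 3 3 (\<lambda>(i,j). if (i,j) = (0,0) \<or> (i,j) = (2,2) then 1 else 0)"

end

(* Over any field of characteristic 2, a and b act
   nilpotently and c is idempotent, since c^2 = -c = c. A simple module therefore contains
   v /= 0 with a v = 0 and c v = 0 or c v = v. The relations make b flip the c-eigenvalue, and
   a moves back along the string v, b v, b^2 v, b^3 v. If c v = 0, then b v, b^2 v, b^3 v span a
   copy of V_1 with a and b exchanged; if c v = v, then b^3 v spans a copy of V_0. Either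
   submodule lies in the image of the nilpotent b, so it vanishes in a simple module. Hence
   b v = 0 and v spans a copy of V_0, or b^3 v = 0 and b^2 v, b v, v span a copy of V_1, and
   since V_0 and V_1 are simple, Schur's argument turns these nonzero homomorphisms into
   isomorphisms. *)

theory Submission
  imports Defs "Jordan_Normal_Form.DL_Rank" "Jordan_Normal_Form.Matrix_Kernel"
begin

section \<open>Vectors and matrices\<close>

lemma char_2_add_self:
  assumes "CHAR('k::semiring_1) = 2"
  shows "(x::'k) + x = 0"
proof -
  have "(2::'k) = 0"
    using assms of_nat_CHAR[where 'a = 'k] by simp
  then show ?thesis
    by (metis mult_2 mult_zero_left)
qed

lemma char_2_vec_add_self:
  assumes "CHAR('k::semiring_1) = 2" and "x \<in> carrier_vec n"
  shows "x + x = (0\<^sub>v n :: 'k vec)"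
  using assms by (intro eq_vecI) (simp_all add: char_2_add_self)

lemma char_2_vec_add_eqD:
  assumes "CHAR('k::semiring_1) = 2" and "x \<in> carrier_vec n" "y \<in> carrier_vec n"
    and "x + y = (z :: 'k vec)"
  shows "x = z + y"
proof -
  have "z + y = x + (y + y)"
    using assms(2-4) by (auto simp: assoc_add_vec)
  also have "\<dots> = x"
    using assms(1-3) by (simp add: char_2_vec_add_self)
  finally show ?thesis ..
qed

lemma mult_mat_vec_zero_vec [simp]:
  "X \<in> carrier_mat n k \<Longrightarrow> X *\<^sub>v 0\<^sub>v k = 0\<^sub>v n"
  by (intro eq_vecI) auto

lemma smult_zero_vec [simp]: "(s :: 'a::mult_zero) \<cdot>\<^sub>v 0\<^sub>v n = 0\<^sub>v n"
  by (intro eq_vecI) simp_all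

lemma zero_mult_mat_vec [simp]:
  "x \<in> carrier_vec k \<Longrightarrow> 0\<^sub>m n k *\<^sub>v x = 0\<^sub>v n"
  by (intro eq_vecI) auto

lemma mult_mat_vec_unit_vec:
  "X \<in> carrier_mat n k \<Longrightarrow> j < k \<Longrightarrow> (X :: 'a::semiring_1 mat) *\<^sub>v unit_vec k j = col X j"
  by (intro eq_vecI) auto

lemma mat_eq_zero_if_mult_vec_zero:
  fixes X :: "'a::semiring_1 mat"
  assumes "X \<in> carrier_mat n k" and "\<And>x. x \<in> carrier_vec k \<Longrightarrow> X *\<^sub>v x = 0\<^sub>v n"
  shows "X = 0\<^sub>m n k"
proof (rule mat_col_eqI)
  fix j assume "j < dim_col (0\<^sub>m n k :: 'a mat)"
  then show "col X j = col (0\<^sub>m n k) j"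
    using assms mult_mat_vec_unit_vec[OF assms(1), of j] by simp
qed (use assms(1) in auto)

lemma mult_mat_of_cols:
  assumes "X \<in> carrier_mat n n" and "set vs \<subseteq> carrier_vec n"
  shows "X * mat_of_cols n vs = mat_of_cols n (map ((*\<^sub>v) X) vs)"
  by (rule mat_col_eqI) (use assms in \<open>auto simp: nth_mem subsetD\<close>)

lemma mat_of_cols_eq_zeroD:
  assumes "mat_of_cols n vs = 0\<^sub>m n k" and "v \<in> set vs" "v \<in> carrier_vec n"
  shows "v = 0\<^sub>v n"
proof -
  obtain j where j: "j < length vs" "vs ! j = v"
    using assms(2) by (auto simp: in_set_conv_nth)
  have "length vs = k"
    using arg_cong[OF assms(1), of dim_col] by simp
  then have "col (mat_of_cols n vs) j = col (0\<^sub>m n k) j"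
    using assms(1) by simp
  then show ?thesis
    using j assms(3) \<open>length vs = k\<close> by simp
qed

lemma mult_mat_eq_by_unit_vecs:
  fixes X Q M :: "'a::semiring_1 mat"
  assumes "X \<in> carrier_mat n n" "Q \<in> carrier_mat n k" "M \<in> carrier_mat k k"
    and "\<And>j. j < k \<Longrightarrow> X *\<^sub>v (Q *\<^sub>v unit_vec k j) = Q *\<^sub>v (M *\<^sub>v unit_vec k j)"
  shows "X * Q = Q * M"
  by (rule mat_col_eqI) (use assms in \<open>auto simp: mult_mat_vec_unit_vec\<close>)

lemma char_2_anticommutator_mult_vec:
  fixes X Y Z :: "'k::field mat"
  assumes "CHAR('k) = 2" and "X \<in> carrier_mat n n" "Y \<in> carrier_mat n n"
    and "X * Y + Y * X = Z" and "x \<in> carrier_vec n"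
  shows "X *\<^sub>v (Y *\<^sub>v x) = Z *\<^sub>v x + Y *\<^sub>v (X *\<^sub>v x)"
proof (rule char_2_vec_add_eqD[OF assms(1), of _ n])
  show "X *\<^sub>v (Y *\<^sub>v x) + Y *\<^sub>v (X *\<^sub>v x) = Z *\<^sub>v x"
    using assms(2-5) by (auto simp: add_mult_distrib_mat_vec[of "X * Y" n n "Y * X"])
qed (use assms(2,3,5) in \<open>auto intro: mult_mat_vec_carrier\<close>)

lemma intertwine_mult_vec:
  assumes X: "X \<in> carrier_mat n n" and Q: "Q \<in> carrier_mat n k" and X': "X' \<in> carrier_mat k k"
    and XQ: "X * Q = Q * X'" and x: "x \<in> carrier_vec k"
  shows "X *\<^sub>v (Q *\<^sub>v x) = Q *\<^sub>v (X' *\<^sub>v x)"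
proof -
  have "X *\<^sub>v (Q *\<^sub>v x) = (X * Q) *\<^sub>v x"
    by (rule assoc_mult_mat_vec[OF X Q x, symmetric])
  also have "\<dots> = Q *\<^sub>v (X' *\<^sub>v x)"
    unfolding XQ by (rule assoc_mult_mat_vec[OF Q X' x])
  finally show ?thesis .
qed

lemma intertwine_inverse:
  fixes P Q X X' :: "'a::semiring_1 mat"
  assumes P: "P \<in> carrier_mat n n" and Q: "Q \<in> carrier_mat n n"
    and X: "X \<in> carrier_mat n n" and X': "X' \<in> carrier_mat n n"
    and PQ: "P * Q = 1\<^sub>m n" and QP: "Q * P = 1\<^sub>m n" and XQ: "X * Q = Q * X'"
  shows "P * X = X' * P"
proof -
  have PX: "P * X \<in> carrier_mat n n"
    using P X by simp
  have "P * X = (P * X) * (Q * P)"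
    using right_mult_one_mat[OF PX] QP by simp
  also have "\<dots> = (P * (X * Q)) * P"
    using assoc_mult_mat[OF PX Q P] assoc_mult_mat[OF P X Q] by simp
  also have "\<dots> = ((P * Q) * X') * P"
    using assoc_mult_mat[OF P Q X'] XQ by simp
  also have "\<dots> = X' * P"
    using PQ X' by simp
  finally show ?thesis .
qed

lemma pow_mat_Suc_mult_vec:
  assumes "X \<in> carrier_mat n n" and "x \<in> carrier_vec n"
  shows "(X ^\<^sub>m Suc j) *\<^sub>v x = (X ^\<^sub>m j) *\<^sub>v (X *\<^sub>v x)"
  using assms by (simp add: assoc_mult_mat_vec[of "X ^\<^sub>m j" n n X n])

lemma pow_4_mult_vec:
  assumes "X \<in> carrier_mat n n" and "x \<in> carrier_vec n"
  shows "(X ^\<^sub>m 4) *\<^sub>v x = X *\<^sub>v (X *\<^sub>v (X *\<^sub>v (X *\<^sub>v x)))"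
  using assms by (simp add: numeral_eq_Suc pow_mat_Suc_mult_vec del: pow_mat.simps(2))

lemma nilpotent_mat_kernel_meets_invariant:
  assumes X: "X \<in> carrier_mat n n" and nil: "X ^\<^sub>m m = 0\<^sub>m n n"
    and W: "W \<subseteq> carrier_vec n" "\<And>x. x \<in> W \<Longrightarrow> X *\<^sub>v x \<in> W"
    and w: "w \<in> W" "w \<noteq> 0\<^sub>v n"
  obtains u where "u \<in> W" "u \<noteq> 0\<^sub>v n" "X *\<^sub>v u = 0\<^sub>v n"
proof -
  have "\<exists>u\<in>W. u \<noteq> 0\<^sub>v n \<and> X *\<^sub>v u = 0\<^sub>v n"
    if "w \<in> W" "w \<noteq> 0\<^sub>v n" "(X ^\<^sub>m j) *\<^sub>v w = 0\<^sub>v n" for j w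
    using that
  proof (induction j arbitrary: w)
    case 0
    then show ?case using W(1) X by auto
  next
    case (Suc j)
    have "(X ^\<^sub>m j) *\<^sub>v (X *\<^sub>v w) = 0\<^sub>v n"
      using Suc.prems W(1) pow_mat_Suc_mult_vec[OF X] by auto
    then show ?case
      using Suc.IH[of "X *\<^sub>v w"] Suc.prems(1,2) W(2) by blast
  qed
  moreover have "(X ^\<^sub>m m) *\<^sub>v w = 0\<^sub>v n"
    using nil w(1) W(1) by auto
  ultimately show ?thesis
    using that w by blast
qed

lemma nilpotent_mat_not_surj:
  assumes X: "X \<in> carrier_mat n n" and nil: "X ^\<^sub>m m = 0\<^sub>m n n" and "0 < n"
  shows "(*\<^sub>v) X ` carrier_vec n \<noteq> carrier_vec n"
proof
  assume surj: "(*\<^sub>v) X ` carrier_vec n = carrier_vec n"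
  have "(*\<^sub>v) (X ^\<^sub>m j) ` carrier_vec n = carrier_vec n" for j
  proof (induction j)
    case 0
    then show ?case using X by auto
  next
    case (Suc j)
    have "(*\<^sub>v) (X ^\<^sub>m Suc j) ` carrier_vec n = (*\<^sub>v) (X ^\<^sub>m j) ` (*\<^sub>v) X ` carrier_vec n"
      unfolding image_image using pow_mat_Suc_mult_vec[OF X] by (intro image_cong) simp_all
    then show ?case
      using Suc.IH surj by simp
  qed
  then have "unit_vec n 0 \<in> (*\<^sub>v) (X ^\<^sub>m m) ` carrier_vec n"
    by simp
  then have "unit_vec n 0 = (0\<^sub>v n :: 'a vec)"
    using nil by auto
  then show False
    using \<open>0 < n\<close> by simp
qed

lemma dim_eq_if_mult_mat_vec_bij:
  fixes Q :: "'k::field mat"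
  assumes Q: "Q \<in> carrier_mat n k"
    and surj: "(*\<^sub>v) Q ` carrier_vec k = carrier_vec n" and inj: "mat_kernel Q = {0\<^sub>v k}"
  shows "n = k"
proof -
  interpret vec_space "TYPE('k)" n .
  have cols: "set (cols Q) \<subseteq> carrier_vec n"
    using Q cols_dim by blast
  have kernel: "x = 0\<^sub>v k" if "x \<in> carrier_vec k" "Q *\<^sub>v x = 0\<^sub>v n" for x
    using inj mat_kernelI[OF Q that] by blast
  have "span (set (cols Q)) = {y \<in> carrier_vec n. \<exists>x\<in>carrier_vec k. Q *\<^sub>v x = y}"
    using col_space_eq[OF Q] Q unfolding col_space_def by simp
  also have "\<dots> = (*\<^sub>v) Q ` carrier_vec k"
    using Q by auto
  also have "\<dots> = carrier_vec n"
    by (rule surj)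
  finally have "span (set (cols Q)) = carrier_vec n" .
  then have "n \<le> card (set (cols Q))"
    using gen_ge_dim[OF _ cols] dim_is_n by simp
  also have "\<dots> \<le> k"
    using card_length[of "cols Q"] Q by simp
  finally have "n \<le> k" .
  have distinct: "distinct (cols Q)"
  proof (clarsimp simp: distinct_conv_nth)
    fix i j assume ij: "i < dim_col Q" "j < dim_col Q" "i \<noteq> j" "col Q i = col Q j"
    have "Q *\<^sub>v (unit_vec k i - unit_vec k j) = col Q i - col Q j"
      using ij Q by (simp add: mult_minus_distrib_mat_vec mult_mat_vec_unit_vec)
    then have "unit_vec k i - unit_vec k j = (0\<^sub>v k :: 'k vec)"
      using ij Q by (intro kernel) auto
    then have "(unit_vec k i - unit_vec k j) $ i = (0\<^sub>v k :: 'k vec) $ i"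
      by simp
    then show False
      using ij Q by simp
  qed
  have "lin_indpt (set (cols Q))"
  proof
    assume "lin_dep (set (cols Q))"
    then obtain x where "x \<in> carrier_vec k" "x \<noteq> 0\<^sub>v k" "Q *\<^sub>v x = 0\<^sub>v n"
      using lin_depE[OF Q _ distinct] by blast
    then show False
      using kernel by blast
  qed
  then have "card (set (cols Q)) \<le> n"
    using li_le_dim(2)[OF fin_dim cols] dim_is_n by simp
  then have "k \<le> n"
    using distinct_card[OF distinct] Q by simp
  with \<open>n \<le> k\<close> show ?thesis
    by simp
qed

lemma mat_inverse_if_kernel_trivial:
  fixes Q :: "'k::field mat"
  assumes Q: "Q \<in> carrier_mat n n" and inj: "mat_kernel Q = {0\<^sub>v n}"
  obtains P where "P \<in> carrier_mat n n" "P * Q = 1\<^sub>m n" "Q * P = 1\<^sub>m n"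
proof -
  have "det Q \<noteq> 0"
    using det_0_iff_vec_prod_zero[OF Q] inj mat_kernelI[OF Q] by blast
  from det_non_zero_imp_unit[OF Q this, of "()"] show ?thesis
    using that unfolding Units_def ring_mat_simps by auto
qed

section \<open>Homomorphisms of \<open>u(m)\<close>-modules\<close>

definition module_hom ::
  "nat \<Rightarrow> 'k::field mat \<Rightarrow> 'k mat \<Rightarrow> 'k mat \<Rightarrow> nat \<Rightarrow> 'k mat \<Rightarrow> 'k mat \<Rightarrow> 'k mat \<Rightarrow> 'k mat \<Rightarrow> bool"
  where "module_hom k A' B' C' n A B C Q \<longleftrightarrow>
    Q \<in> carrier_mat n k \<and> A * Q = Q * A' \<and> B * Q = Q * B' \<and> C * Q = Q * C'"

lemma module_hom_swap:
  "module_hom k A' B' C' n A B C Q \<longleftrightarrow> module_hom k B' A' C' n B A C Q"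
  unfolding module_hom_def by auto

lemma module_homD:
  assumes "module_hom k A' B' C' n A B C Q"
  shows "Q \<in> carrier_mat n k" "A * Q = Q * A'" "B * Q = Q * B'" "C * Q = Q * C'"
  using assms unfolding module_hom_def by blast+

lemma um_module_carrier:
  assumes "um_module n A B C"
  shows "A \<in> carrier_mat n n" "B \<in> carrier_mat n n" "C \<in> carrier_mat n n"
  using assms unfolding um_module_def by auto

lemma um_module_relations:
  assumes "um_module n A B C"
  shows "A * B + B * A = C" "A * C + C * A = A" "B * C + C * B = B"
    "A ^\<^sub>m 4 = 0\<^sub>m n n" "B ^\<^sub>m 4 = 0\<^sub>m n n" "C * C + C = 0\<^sub>m n n"
  using assms unfolding um_module_def by blast+

lemma um_module_swap:
  assumes "um_module n A B C"
  shows "um_module n B A C"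
  using assms comm_add_mat[of "A * B" n n "B * A"] unfolding um_module_def by auto

lemma simple_moduleI:
  assumes "um_module n A B C" and "0 < n"
    and "\<And>W w. invariant_subspace n A B C W \<Longrightarrow> w \<in> W \<Longrightarrow> w \<noteq> 0\<^sub>v n \<Longrightarrow> W = carrier_vec n"
  shows "simple_module n A B C"
  using assms unfolding simple_module_def invariant_subspace_def by blast

lemma simple_moduleD:
  assumes "simple_module n A B C" and "invariant_subspace n A B C W" and "W \<noteq> {0\<^sub>v n}"
  shows "W = carrier_vec n"
  using assms unfolding simple_module_def by blast

lemma invariant_subspace_eq_carrier_if_unit_vecs:
  fixes W :: "'k::field vec set"
  assumes W: "invariant_subspace n A B C W" and units: "\<And>i. i < n \<Longrightarrow> unit_vec n i \<in> W"
  shows "W = carrier_vec n"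
proof -
  interpret vec_space "TYPE('k)" n .
  have "submodule class_ring W V"
    using W vec_module unfolding submodule_def invariant_subspace_def by (auto simp: module_vec_simps)
  moreover have "set (unit_vecs n) \<subseteq> W"
    using units unfolding unit_vecs_def by auto
  ultimately have "carrier_vec n \<subseteq> W"
    using span_is_subset span_unit_vecs_is_carrier by metis
  then show ?thesis
    using W unfolding invariant_subspace_def by blast
qed

lemma invariant_subspace_image:
  assumes M: "um_module n A B C" and M': "um_module k A' B' C'"
    and hom: "module_hom k A' B' C' n A B C Q"
  shows "invariant_subspace n A B C ((*\<^sub>v) Q ` carrier_vec k)"
proof -
  note Q = module_homD(1)[OF hom]
  have act: "X *\<^sub>v y \<in> (*\<^sub>v) Q ` carrier_vec k"
    if X: "X \<in> carrier_mat n n" and X': "X' \<in> carrier_mat k k" and XQ: "X * Q = Q * X'"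
      and y: "y \<in> (*\<^sub>v) Q ` carrier_vec k" for X X' y
  proof -
    obtain x where x: "x \<in> carrier_vec k" "y = Q *\<^sub>v x"
      using y by blast
    show ?thesis
      unfolding x(2) intertwine_mult_vec[OF X Q X' XQ x(1)]
      using X' x(1) by (intro imageI) simp
  qed
  show ?thesis
    unfolding invariant_subspace_def
  proof (intro conjI ballI allI)
    show "0\<^sub>v n \<in> (*\<^sub>v) Q ` carrier_vec k"
      using mult_mat_vec_zero_vec[OF Q] by (intro image_eqI[of _ _ "0\<^sub>v k"]) simp_all
    fix x y assume "x \<in> (*\<^sub>v) Q ` carrier_vec k" "y \<in> (*\<^sub>v) Q ` carrier_vec k"
    then obtain x' y' where xy: "x' \<in> carrier_vec k" "y' \<in> carrier_vec k" "x = Q *\<^sub>v x'" "y = Q *\<^sub>v y'"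
      by blast
    then show "x + y \<in> (*\<^sub>v) Q ` carrier_vec k"
      using mult_add_distrib_mat_vec[OF Q xy(1,2)] by (intro image_eqI[of _ _ "x' + y'"]) simp_all
  next
    fix s x assume "x \<in> (*\<^sub>v) Q ` carrier_vec k"
    then obtain x' where x: "x' \<in> carrier_vec k" "x = Q *\<^sub>v x'"
      by blast
    then show "s \<cdot>\<^sub>v x \<in> (*\<^sub>v) Q ` carrier_vec k"
      using mult_mat_vec[OF Q x(1), of s] by (intro image_eqI[of _ _ "s \<cdot>\<^sub>v x'"]) simp_all
  next
    fix x assume x: "x \<in> (*\<^sub>v) Q ` carrier_vec k"
    note carriers = um_module_carrier[OF M] um_module_carrier[OF M']
    note intertwines = module_homD(2-4)[OF hom]
    show "A *\<^sub>v x \<in> (*\<^sub>v) Q ` carrier_vec k"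
      by (rule act[OF carriers(1,4) intertwines(1) x])
    show "B *\<^sub>v x \<in> (*\<^sub>v) Q ` carrier_vec k"
      by (rule act[OF carriers(2,5) intertwines(2) x])
    show "C *\<^sub>v x \<in> (*\<^sub>v) Q ` carrier_vec k"
      by (rule act[OF carriers(3,6) intertwines(3) x])
  next
    show "(*\<^sub>v) Q ` carrier_vec k \<subseteq> carrier_vec n"
      using Q by auto
  qed
qed

lemma invariant_subspace_kernel:
  assumes M: "um_module n A B C" and M': "um_module k A' B' C'"
    and hom: "module_hom k A' B' C' n A B C Q"
  shows "invariant_subspace k A' B' C' (mat_kernel Q)"
proof -
  note Q = module_homD(1)[OF hom]
  have kernel: "x \<in> mat_kernel Q \<longleftrightarrow> x \<in> carrier_vec k \<and> Q *\<^sub>v x = 0\<^sub>v n" for x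
    using mat_kernel[OF Q] by simp
  have act: "X' *\<^sub>v x \<in> mat_kernel Q"
    if "X \<in> carrier_mat n n" "X' \<in> carrier_mat k k" "X * Q = Q * X'" "x \<in> mat_kernel Q" for X X' x
    using intertwine_mult_vec[OF that(1) Q that(2,3), of x] that(1,2,4) unfolding kernel by simp
  show ?thesis
    unfolding invariant_subspace_def
  proof (intro conjI ballI allI)
    fix x y assume "x \<in> mat_kernel Q" "y \<in> mat_kernel Q"
    then show "x + y \<in> mat_kernel Q"
      using mult_add_distrib_mat_vec[OF Q, of x y] unfolding kernel by simp
  next
    fix s x assume "x \<in> mat_kernel Q"
    then show "s \<cdot>\<^sub>v x \<in> mat_kernel Q"
      using mult_mat_vec[OF Q, of x s] unfolding kernel by simp
  next
    fix x assume x: "x \<in> mat_kernel Q"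
    note carriers = um_module_carrier[OF M] um_module_carrier[OF M']
    note intertwines = module_homD(2-4)[OF hom]
    show "A' *\<^sub>v x \<in> mat_kernel Q"
      by (rule act[OF carriers(1,4) intertwines(1) x])
    show "B' *\<^sub>v x \<in> mat_kernel Q"
      by (rule act[OF carriers(2,5) intertwines(2) x])
    show "C' *\<^sub>v x \<in> mat_kernel Q"
      by (rule act[OF carriers(3,6) intertwines(3) x])
  next
    show "0\<^sub>v k \<in> mat_kernel Q"
      using Q unfolding kernel by simp
    show "mat_kernel Q \<subseteq> carrier_vec k"
      by (rule mat_kernel_carrier[OF Q])
  qed
qed

lemma simple_module_hom_iso:
  assumes source: "simple_module k A' B' C'" and target: "simple_module n A B C"
    and hom: "module_hom k A' B' C' n A B C Q" and nonzero: "Q \<noteq> 0\<^sub>m n k"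
  shows "module_iso n A B C k A' B' C'"
proof -
  have um: "um_module k A' B' C'" "um_module n A B C"
    using source target unfolding simple_module_def by blast+
  note Q = module_homD(1)[OF hom]
  have "(*\<^sub>v) Q ` carrier_vec k \<noteq> {0\<^sub>v n}"
    using mat_eq_zero_if_mult_vec_zero[OF Q] nonzero by blast
  then have surj: "(*\<^sub>v) Q ` carrier_vec k = carrier_vec n"
    by (rule simple_moduleD[OF target invariant_subspace_image[OF um(2,1) hom]])
  have "mat_kernel Q \<noteq> carrier_vec k"
    using mat_eq_zero_if_mult_vec_zero[OF Q] nonzero Q by (auto simp: mat_kernel_def)
  then have inj: "mat_kernel Q = {0\<^sub>v k}"
    using simple_moduleD[OF source invariant_subspace_kernel[OF um(2,1) hom]] by blast
  have "n = k"
    by (rule dim_eq_if_mult_mat_vec_bij[OF Q surj inj])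
  then have Q: "Q \<in> carrier_mat n n" and inj: "mat_kernel Q = {0\<^sub>v n}"
    using Q inj by simp_all
  obtain P where P: "P \<in> carrier_mat n n" "P * Q = 1\<^sub>m n" "Q * P = 1\<^sub>m n"
    using mat_inverse_if_kernel_trivial[OF Q inj] .
  have "invertible_mat P"
    using P Q unfolding invertible_mat_def inverts_mat_def by auto
  moreover have "P * A = A' * P" "P * B = B' * P" "P * C = C' * P"
    using um_module_carrier[OF um(1)] um_module_carrier[OF um(2)] module_homD(2-4)[OF hom]
    by (auto intro: intertwine_inverse[OF P(1) Q _ _ P(2,3)] simp: \<open>n = k\<close>)
  ultimately show ?thesis
    unfolding module_iso_def using \<open>n = k\<close> P(1) by blast
qed

lemma module_hom_mult_B_eq_zero:
  assumes simple: "simple_module n A B C" and "um_module k A' B' C'"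
    and R: "R \<in> carrier_mat n k" and hom: "module_hom k A' B' C' n A B C (B * R)"
  shows "B * R = 0\<^sub>m n k"
proof (rule ccontr)
  assume "B * R \<noteq> 0\<^sub>m n k"
  have um: "um_module n A B C" and "0 < n"
    using simple unfolding simple_module_def by blast+
  note B = um_module_carrier(2)[OF um]
  have BR: "B * R \<in> carrier_mat n k"
    using B R by simp
  have "(*\<^sub>v) (B * R) ` carrier_vec k \<noteq> {0\<^sub>v n}"
    using mat_eq_zero_if_mult_vec_zero[OF BR] \<open>B * R \<noteq> 0\<^sub>m n k\<close> by blast
  then have "(*\<^sub>v) (B * R) ` carrier_vec k = carrier_vec n"
    by (rule simple_moduleD[OF simple invariant_subspace_image[OF um assms(2) hom]])
  moreover have "(*\<^sub>v) (B * R) ` carrier_vec k \<subseteq> (*\<^sub>v) B ` carrier_vec n"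
    using B R by auto
  ultimately have "(*\<^sub>v) B ` carrier_vec n = carrier_vec n"
    using B by auto
  then show False
    using nilpotent_mat_not_surj[OF B um_module_relations(5)[OF um] \<open>0 < n\<close>] by blast
qed

section \<open>The modules \<open>V\<^sub>0\<close> and \<open>V\<^sub>1\<close>\<close>

lemma module_hom_from_V0:
  assumes "A \<in> carrier_mat n n" "B \<in> carrier_mat n n" "C \<in> carrier_mat n n" and "q \<in> carrier_vec n"
    and "A *\<^sub>v q = 0\<^sub>v n" "B *\<^sub>v q = 0\<^sub>v n" "C *\<^sub>v q = 0\<^sub>v n"
  shows "module_hom 1 V0_a V0_b V0_c n A B C (mat_of_cols n [q])"
  unfolding module_hom_def V0_a_def V0_b_def V0_c_def
  using assms by (auto simp: mult_mat_of_cols mat_of_cols_Cons_index_0 intro!: eq_matI)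

lemma V1_unit_vecs:
  "V1_a *\<^sub>v unit_vec 3 0 = unit_vec 3 1" "V1_a *\<^sub>v unit_vec 3 1 = unit_vec 3 2"
  "V1_a *\<^sub>v unit_vec 3 2 = 0\<^sub>v 3"
  "V1_b *\<^sub>v unit_vec 3 0 = 0\<^sub>v 3" "V1_b *\<^sub>v unit_vec 3 1 = unit_vec 3 0"
  "V1_b *\<^sub>v unit_vec 3 2 = unit_vec 3 1"
  "V1_c *\<^sub>v unit_vec 3 0 = unit_vec 3 0" "V1_c *\<^sub>v unit_vec 3 1 = 0\<^sub>v 3"
  "V1_c *\<^sub>v unit_vec 3 2 = unit_vec 3 2"
  by (intro eq_vecI; simp add: V1_a_def V1_b_def V1_c_def)+

lemma V1_carrier [simp]:
  "V1_a \<in> carrier_mat 3 3" "V1_b \<in> carrier_mat 3 3" "V1_c \<in> carrier_mat 3 3"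
  by (simp_all add: V1_a_def V1_b_def V1_c_def)

lemma module_hom_from_V1:
  assumes A: "A \<in> carrier_mat n n" and B: "B \<in> carrier_mat n n" and C: "C \<in> carrier_mat n n"
    and q: "q0 \<in> carrier_vec n" "q1 \<in> carrier_vec n" "q2 \<in> carrier_vec n"
    and "A *\<^sub>v q0 = q1" "A *\<^sub>v q1 = q2" "A *\<^sub>v q2 = 0\<^sub>v n"
    and "B *\<^sub>v q0 = 0\<^sub>v n" "B *\<^sub>v q1 = q0" "B *\<^sub>v q2 = q1"
    and "C *\<^sub>v q0 = q0" "C *\<^sub>v q1 = 0\<^sub>v n" "C *\<^sub>v q2 = q2"
  shows "module_hom 3 V1_a V1_b V1_c n A B C (mat_of_cols n [q0, q1, q2])"
proof -
  let ?Q = "mat_of_cols n [q0, q1, q2]"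
  have Q: "?Q \<in> carrier_mat n 3"
    using mat_of_cols_carrier(1)[of n "[q0, q1, q2]"] by (simp add: numeral_3_eq_3)
  have Q_units: "?Q *\<^sub>v unit_vec 3 0 = q0" "?Q *\<^sub>v unit_vec 3 1 = q1" "?Q *\<^sub>v unit_vec 3 2 = q2"
    using mult_mat_vec_unit_vec[OF Q] q by (simp_all add: numeral_2_eq_2)
  have intertwines: "X * ?Q = ?Q * M"
    if "X \<in> carrier_mat n n" "M \<in> carrier_mat 3 3"
      and "X *\<^sub>v q0 = ?Q *\<^sub>v (M *\<^sub>v unit_vec 3 0)" "X *\<^sub>v q1 = ?Q *\<^sub>v (M *\<^sub>v unit_vec 3 1)"
        "X *\<^sub>v q2 = ?Q *\<^sub>v (M *\<^sub>v unit_vec 3 2)"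
    for X M
  proof (rule mult_mat_eq_by_unit_vecs[OF that(1) Q that(2)])
    fix j :: nat assume "j < 3"
    then consider "j = 0" | "j = 1" | "j = 2"
      by linarith
    then show "X *\<^sub>v (?Q *\<^sub>v unit_vec 3 j) = ?Q *\<^sub>v (M *\<^sub>v unit_vec 3 j)"
      by cases (simp_all only: that(3-5) Q_units)
  qed
  have "A * ?Q = ?Q * V1_a" "B * ?Q = ?Q * V1_b" "C * ?Q = ?Q * V1_c"
    by (rule intertwines;
        simp only: A B C V1_carrier V1_unit_vecs Q_units mult_mat_vec_zero_vec[OF Q] assms(7-))+
  with Q show ?thesis
    unfolding module_hom_def by blast
qed

lemma V0_um: "um_module 1 (V0_a :: 'k::field mat) V0_b V0_c"
  unfolding um_module_def V0_a_def V0_b_def V0_c_def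
  by (simp add: eval_nat_numeral)

lemma V1_um:
  assumes "CHAR('k::field) = 2"
  shows "um_module 3 (V1_a :: 'k mat) V1_b V1_c"
  using char_2_add_self[OF assms, of 1]
  unfolding um_module_def
  by (intro conjI V1_carrier eq_matI)
    (auto simp: V1_a_def V1_b_def V1_c_def scalar_prod_def eval_nat_numeral
      sum.atLeast0_lessThan_Suc less_Suc_eq)

lemma V0_simple: "simple_module 1 (V0_a :: 'k::field mat) V0_b V0_c"
proof (rule simple_moduleI[OF V0_um])
  fix W and w :: "'k vec"
  assume W: "invariant_subspace 1 V0_a V0_b V0_c W" and w: "w \<in> W" "w \<noteq> 0\<^sub>v 1"
  have "w \<in> carrier_vec 1"
    using W w(1) unfolding invariant_subspace_def by blast
  then have "w $ 0 \<noteq> 0" and "unit_vec 1 0 = (1 / w $ 0) \<cdot>\<^sub>v w"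
    using w(2) by (auto intro!: eq_vecI)
  then have "unit_vec 1 0 \<in> W"
    using W w(1) unfolding invariant_subspace_def by metis
  then show "W = carrier_vec 1"
    using invariant_subspace_eq_carrier_if_unit_vecs[OF W] by auto
qed simp

lemma V1_simple:
  assumes char_2: "CHAR('k::field) = 2"
  shows "simple_module 3 (V1_a :: 'k mat) V1_b V1_c"
proof (rule simple_moduleI[OF V1_um[OF char_2]])
  fix W and w :: "'k vec"
  assume W: "invariant_subspace 3 V1_a V1_b V1_c W" and w: "w \<in> W" "w \<noteq> 0\<^sub>v 3"
  have W_closed: "W \<subseteq> carrier_vec 3" "\<And>s x. x \<in> W \<Longrightarrow> s \<cdot>\<^sub>v x \<in> W"
    "\<And>x. x \<in> W \<Longrightarrow> V1_a *\<^sub>v x \<in> W" "\<And>x. x \<in> W \<Longrightarrow> V1_b *\<^sub>v x \<in> W"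
    using W unfolding invariant_subspace_def by auto
  obtain u where u: "u \<in> W" "u \<noteq> 0\<^sub>v 3" "V1_a *\<^sub>v u = 0\<^sub>v 3"
    by (rule nilpotent_mat_kernel_meets_invariant[OF V1_carrier(1)
          um_module_relations(4)[OF V1_um[OF char_2]] W_closed(1,3) w])
  have u3: "u \<in> carrier_vec 3"
    using u(1) W_closed(1) by blast
  have "(V1_a *\<^sub>v u) $ 1 = u $ 0" "(V1_a *\<^sub>v u) $ 2 = u $ 1"
    using u3 by (simp_all add: V1_a_def scalar_prod_def eval_nat_numeral sum.atLeast0_lessThan_Suc)
  then have "u $ 0 = 0" "u $ 1 = 0"
    using u(3) by simp_all
  then have "u $ 2 \<noteq> 0" and "unit_vec 3 2 = (1 / u $ 2) \<cdot>\<^sub>v u"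
    using u(2) u3 by (auto simp: less_Suc_eq eval_nat_numeral intro!: eq_vecI)
  then have e2: "unit_vec 3 2 \<in> W"
    using W_closed(2)[OF u(1)] by metis
  have e1: "unit_vec 3 1 \<in> W"
    using W_closed(4)[OF e2] by (simp only: V1_unit_vecs)
  have e0: "unit_vec 3 0 \<in> W"
    using W_closed(4)[OF e1] by (simp only: V1_unit_vecs)
  show "W = carrier_vec 3"
    using e0 e1 e2 by (intro invariant_subspace_eq_carrier_if_unit_vecs[OF W])
      (auto simp: less_Suc_eq eval_nat_numeral)
qed simp

section \<open>Simple modules in characteristic 2\<close>

locale um_module_char_2 =
  fixes n :: nat and A B C :: "'k::field mat"
  assumes um_module: "um_module n A B C" and char_2: "CHAR('k) = 2"
begin

lemma carriers [simp]: "A \<in> carrier_mat n n" "B \<in> carrier_mat n n" "C \<in> carrier_mat n n"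
  using um_module_carrier[OF um_module] by auto

lemma mult_vec_carrier [simp]:
  "x \<in> carrier_vec n \<Longrightarrow> A *\<^sub>v x \<in> carrier_vec n"
  "x \<in> carrier_vec n \<Longrightarrow> B *\<^sub>v x \<in> carrier_vec n"
  "x \<in> carrier_vec n \<Longrightarrow> C *\<^sub>v x \<in> carrier_vec n"
  by (erule mult_mat_vec_carrier[OF carriers(1)] mult_mat_vec_carrier[OF carriers(2)]
      mult_mat_vec_carrier[OF carriers(3)])+

lemma mult_zero_vec [simp]: "A *\<^sub>v 0\<^sub>v n = 0\<^sub>v n" "B *\<^sub>v 0\<^sub>v n = 0\<^sub>v n" "C *\<^sub>v 0\<^sub>v n = 0\<^sub>v n"
  by (rule mult_mat_vec_zero_vec, rule carriers)+

lemma A_B_vec: "x \<in> carrier_vec n \<Longrightarrow> A *\<^sub>v (B *\<^sub>v x) = C *\<^sub>v x + B *\<^sub>v (A *\<^sub>v x)"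
  by (rule char_2_anticommutator_mult_vec[OF char_2 carriers(1,2) um_module_relations(1)[OF um_module]])

lemma A_C_vec: "x \<in> carrier_vec n \<Longrightarrow> A *\<^sub>v (C *\<^sub>v x) = A *\<^sub>v x + C *\<^sub>v (A *\<^sub>v x)"
  by (rule char_2_anticommutator_mult_vec[OF char_2 carriers(1,3) um_module_relations(2)[OF um_module]])

lemma C_B_vec: "x \<in> carrier_vec n \<Longrightarrow> C *\<^sub>v (B *\<^sub>v x) = B *\<^sub>v x + B *\<^sub>v (C *\<^sub>v x)"
  using um_module_relations(3)[OF um_module] comm_add_mat[OF mult_carrier_mat[OF carriers(2,3)]
      mult_carrier_mat[OF carriers(3,2)]]
  by (intro char_2_anticommutator_mult_vec[OF char_2 carriers(3,2)]) simp_all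

lemma C_idempotent_vec:
  assumes x: "x \<in> carrier_vec n"
  shows "C *\<^sub>v (C *\<^sub>v x) = C *\<^sub>v x"
proof -
  have "(C * C + C) *\<^sub>v x = 0\<^sub>v n"
    using um_module_relations(6)[OF um_module] x by simp
  then have "C *\<^sub>v (C *\<^sub>v x) + C *\<^sub>v x = 0\<^sub>v n"
    using add_mult_distrib_mat_vec[OF mult_carrier_mat[OF carriers(3,3)] carriers(3) x]
      assoc_mult_mat_vec[OF carriers(3,3) x] by simp
  then have "C *\<^sub>v (C *\<^sub>v x) = 0\<^sub>v n + C *\<^sub>v x"
    using x by (intro char_2_vec_add_eqD[OF char_2, of _ n]) simp_all
  then show ?thesis
    using x by simp
qed

lemma B_pow_4_mult_vec: "x \<in> carrier_vec n \<Longrightarrow> B *\<^sub>v (B *\<^sub>v (B *\<^sub>v (B *\<^sub>v x))) = 0\<^sub>v n"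
  using pow_4_mult_vec[OF carriers(2)] um_module_relations(5)[OF um_module] by simp

lemma exists_highest_weight_vector:
  assumes "0 < n"
  obtains v where "v \<in> carrier_vec n" "v \<noteq> 0\<^sub>v n" "A *\<^sub>v v = 0\<^sub>v n" "C *\<^sub>v v = 0\<^sub>v n \<or> C *\<^sub>v v = v"
proof -
  have e: "unit_vec n 0 \<in> carrier_vec n" "unit_vec n 0 \<noteq> (0\<^sub>v n :: 'k vec)"
    using assms by simp_all
  obtain w where w: "w \<in> carrier_vec n" "w \<noteq> 0\<^sub>v n" "A *\<^sub>v w = 0\<^sub>v n"
    by (rule nilpotent_mat_kernel_meets_invariant[OF carriers(1) um_module_relations(4)[OF um_module]
          subset_refl mult_vec_carrier(1) e])
  show ?thesis
  proof (cases "C *\<^sub>v w = 0\<^sub>v n")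
    case True
    then show ?thesis
      using that w by blast
  next
    case False
    have "A *\<^sub>v (C *\<^sub>v w) = 0\<^sub>v n" "C *\<^sub>v (C *\<^sub>v w) = C *\<^sub>v w"
      using A_C_vec[OF w(1)] C_idempotent_vec[OF w(1)] w by simp_all
    then show ?thesis
      using that[of "C *\<^sub>v w"] False w(1) by simp
  qed
qed

lemma iso_V0_if_highest_weight_0:
  assumes simple: "simple_module n A B C"
    and v: "v \<in> carrier_vec n" "v \<noteq> 0\<^sub>v n" "A *\<^sub>v v = 0\<^sub>v n" "C *\<^sub>v v = 0\<^sub>v n"
  shows "module_iso n A B C 1 V0_a V0_b V0_c"
proof -
  define v1 v2 v3 where "v1 = B *\<^sub>v v" and "v2 = B *\<^sub>v v1" and "v3 = B *\<^sub>v v2"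
  note B_defs = v1_def[symmetric] v2_def[symmetric] v3_def[symmetric]
  have vs: "v1 \<in> carrier_vec n" "v2 \<in> carrier_vec n" "v3 \<in> carrier_vec n"
    using v(1) by (simp_all add: v1_def v2_def v3_def)
  have C_v1: "C *\<^sub>v v1 = v1" and A_v1: "A *\<^sub>v v1 = 0\<^sub>v n"
    using C_B_vec[OF v(1)] A_B_vec[OF v(1)] v vs by (simp_all add: B_defs)
  have C_v2: "C *\<^sub>v v2 = 0\<^sub>v n" and A_v2: "A *\<^sub>v v2 = v1"
    using C_B_vec[OF vs(1)] A_B_vec[OF vs(1)] C_v1 A_v1 vs
    by (simp_all add: B_defs char_2_vec_add_self[OF char_2])
  have C_v3: "C *\<^sub>v v3 = v3" and A_v3: "A *\<^sub>v v3 = v2"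
    using C_B_vec[OF vs(2)] A_B_vec[OF vs(2)] C_v2 A_v2 vs by (simp_all add: B_defs)
  have B_v3: "B *\<^sub>v v3 = 0\<^sub>v n"
    using B_pow_4_mult_vec[OF v(1)] by (simp add: B_defs)
  have "module_hom 3 V1_b V1_a V1_c n A B C (mat_of_cols n [v1, v2, v3])"
    unfolding module_hom_swap[of _ V1_b]
    by (rule module_hom_from_V1) (simp_all add: vs C_v1 A_v1 C_v2 A_v2 C_v3 A_v3 B_v3 B_defs)
  moreover have "mat_of_cols n [v1, v2, v3] = B * mat_of_cols n [v, v1, v2]"
    using v(1) vs by (simp add: mult_mat_of_cols B_defs)
  moreover have "mat_of_cols n [v, v1, v2] \<in> carrier_mat n 3"
    using mat_of_cols_carrier(1)[of n "[v, v1, v2]"] by (simp add: numeral_3_eq_3)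
  ultimately have "mat_of_cols n [v1, v2, v3] = 0\<^sub>m n 3"
    using module_hom_mult_B_eq_zero[OF simple um_module_swap[OF V1_um[OF char_2]]] by metis
  then have B_v: "B *\<^sub>v v = 0\<^sub>v n"
    using mat_of_cols_eq_zeroD[of n "[v1, v2, v3]" 3 v1] vs by (simp add: B_defs)
  have "module_hom 1 V0_a V0_b V0_c n A B C (mat_of_cols n [v])"
    using v B_v by (intro module_hom_from_V0) simp_all
  moreover have "mat_of_cols n [v] \<noteq> 0\<^sub>m n 1"
    using mat_of_cols_eq_zeroD[of n "[v]" 1 v] v(1,2) by auto
  ultimately show ?thesis
    using simple_module_hom_iso[OF V0_simple simple] by blast
qed

lemma iso_V1_if_highest_weight_1:
  assumes simple: "simple_module n A B C"
    and v: "v \<in> carrier_vec n" "v \<noteq> 0\<^sub>v n" "A *\<^sub>v v = 0\<^sub>v n" "C *\<^sub>v v = v"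
  shows "module_iso n A B C 3 V1_a V1_b V1_c"
proof -
  define v1 v2 v3 where "v1 = B *\<^sub>v v" and "v2 = B *\<^sub>v v1" and "v3 = B *\<^sub>v v2"
  note B_defs = v1_def[symmetric] v2_def[symmetric] v3_def[symmetric]
  have vs: "v1 \<in> carrier_vec n" "v2 \<in> carrier_vec n" "v3 \<in> carrier_vec n"
    using v(1) by (simp_all add: v1_def v2_def v3_def)
  have C_v1: "C *\<^sub>v v1 = 0\<^sub>v n" and A_v1: "A *\<^sub>v v1 = v"
    using C_B_vec[OF v(1)] A_B_vec[OF v(1)] v vs by (simp_all add: B_defs char_2_vec_add_self[OF char_2])
  have C_v2: "C *\<^sub>v v2 = v2" and A_v2: "A *\<^sub>v v2 = v1"
    using C_B_vec[OF vs(1)] A_B_vec[OF vs(1)] C_v1 A_v1 v vs by (simp_all add: B_defs)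
  have C_v3: "C *\<^sub>v v3 = 0\<^sub>v n" and A_v3: "A *\<^sub>v v3 = 0\<^sub>v n"
    using C_B_vec[OF vs(2)] A_B_vec[OF vs(2)] C_v2 A_v2 vs
    by (simp_all add: B_defs char_2_vec_add_self[OF char_2])
  have B_v3: "B *\<^sub>v v3 = 0\<^sub>v n"
    using B_pow_4_mult_vec[OF v(1)] by (simp add: B_defs)
  have "module_hom 1 V0_a V0_b V0_c n A B C (mat_of_cols n [v3])"
    using vs C_v3 A_v3 B_v3 by (intro module_hom_from_V0) simp_all
  moreover have "mat_of_cols n [v3] = B * mat_of_cols n [v2]"
    using vs by (simp add: mult_mat_of_cols B_defs)
  moreover have "mat_of_cols n [v2] \<in> carrier_mat n 1"
    using mat_of_cols_carrier(1)[of n "[v2]"] by simp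
  ultimately have "mat_of_cols n [v3] = 0\<^sub>m n 1"
    using module_hom_mult_B_eq_zero[OF simple V0_um] by metis
  then have "v3 = 0\<^sub>v n"
    using mat_of_cols_eq_zeroD[of n "[v3]" 1 v3] vs by simp
  then have "module_hom 3 V1_a V1_b V1_c n A B C (mat_of_cols n [v2, v1, v])"
    by (intro module_hom_from_V1) (simp_all add: v vs C_v1 A_v1 C_v2 A_v2 B_defs)
  moreover have "mat_of_cols n [v2, v1, v] \<noteq> 0\<^sub>m n 3"
    using mat_of_cols_eq_zeroD[of n "[v2, v1, v]" 3 v] v(1,2) by auto
  ultimately show ?thesis
    using simple_module_hom_iso[OF V1_simple[OF char_2] simple] by blast
qed

lemma simple_module_classification:
  assumes "simple_module n A B C"
  shows "module_iso n A B C 1 V0_a V0_b V0_c \<or> module_iso n A B C 3 V1_a V1_b V1_c"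
proof -
  have "0 < n"
    using assms unfolding simple_module_def by blast
  then obtain v where "v \<in> carrier_vec n" "v \<noteq> 0\<^sub>v n" "A *\<^sub>v v = 0\<^sub>v n" "C *\<^sub>v v = 0\<^sub>v n \<or> C *\<^sub>v v = v"
    by (rule exists_highest_weight_vector)
  then show ?thesis
    using iso_V0_if_highest_weight_0[OF assms] iso_V1_if_highest_weight_1[OF assms] by blast
qed

end

theorem proposition3p1:
  assumes "CHAR('k::alg_closed_field) = 2"
  shows "simple_module 1 (V0_a :: 'k mat) V0_b V0_c \<and>
         simple_module 3 (V1_a :: 'k mat) V1_b V1_c \<and>
         (\<forall>n (A :: 'k mat) B C. simple_module n A B C \<longrightarrow>
            module_iso n A B C 1 V0_a V0_b V0_c \<or> module_iso n A B C 3 V1_a V1_b V1_c)"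
proof (intro conjI allI impI)
  show "simple_module 1 (V0_a :: 'k mat) V0_b V0_c"
    by (rule V0_simple)
  show "simple_module 3 (V1_a :: 'k mat) V1_b V1_c"
    by (rule V1_simple[OF assms])
  fix n and A B C :: "'k mat"
  assume simple: "simple_module n A B C"
  interpret um_module_char_2 n A B C
    using simple assms by unfold_locales (simp add: simple_module_def)
  show "module_iso n A B C 1 V0_a V0_b V0_c \<or> module_iso n A B C 3 V1_a V1_b V1_c"
    using simple by (rule simple_module_classification)
qed

end
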